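(* For all integers $n\ge0$ and $p\ge0$, $$\mathcal{B}_{n,p}=\sum_{k\ge0}\binom{p+k}{k}^{-1}{}_1F_1(k+1;p+k+1;-1)\frac{k^n}{k!},$$ with the convention $0^0=1$.
   Context: ${}_1F_1(a;c;w)=\sum_{n\ge0}\frac{a^{\overline n}}{c^{\overline n}}\frac{w^n}{n!}$ is Kummer's confluent hypergeometric function, where $a^{\overline n}=a(a+1)\cdots(a+n-1)$. For an integer $p\ge0$, the $p$-Bell numbers $\mathcal{B}_{n,p}$ are defined by $\sum_{n\ge0}\mathcal{B}_{n,p}\frac{z^n}{n!}=\sum_{n\ge0}\binom{n+p}{p}^{-1}\frac{(e^z-1)^n}{n!}$. *)

theory Defs
  imports "HOL-Analysis.Analysis" "HOL-Computational_Algebra.Formal_Power_Series"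
begin

definition hyp1F1 :: "real \<Rightarrow> real \<Rightarrow> real \<Rightarrow> real" where
  "hyp1F1 a c w = (\<Sum>n. pochhammer a n / pochhammer c n * w ^ n / fact n)"

text \<open>p-Bell numbers via their exponential generating function
  sum_k binom(k+p,p)^{-1} (e^z-1)^k / k!, taken as a formal power series:
  the n-th coefficient of the (formally convergent) series, times n!.\<close>
definition pBell :: "nat \<Rightarrow> nat \<Rightarrow> real" where
  "pBell n p = fact n *
     (\<Sum>k. fps_nth ((fps_exp (1::real) - 1) ^ k) n / (fact k * real ((k + p) choose p)))"

end

theory Submission
  imports Defs
begin

text \<open>
  Expanding \<open>(e\<^sup>z - 1)\<^sup>j\<close> by the binomial theorem turns the defining series of
  \<open>B(n,p)\<close> into the diagonal sums \<open>k + m = j\<close> of the absolutely convergent double series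
  \<open>\<Sum>k,m. k\<^sup>n/k! * (-1)\<^sup>m/m! / C(p+k+m, p)\<close>. Summing it by rows instead gives the
  claimed series: since \<open>(k+1)\<^sup>(\<^sup>m\<^sup>) / (p+k+1)\<^sup>(\<^sup>m\<^sup>) = C(p+k, k) / C(p+k+m, p)\<close>,
  row \<open>k\<close> sums to \<open>k\<^sup>n/k! * 1F1(k+1; p+k+1; -1) / C(p+k, k)\<close>.
\<close>

lemma fact_add_eq_fact_mult_pochhammer:
  "fact (a + m) = (fact a :: 'a::{semiring_char_0,comm_semiring_1}) * pochhammer (of_nat a + 1) m"
  by (simp add: pochhammer_fact pochhammer_product' add.commute)

lemma pochhammer_ratio_div_binomial:
  "pochhammer (real k + 1) m / pochhammer (real (p + k) + 1) m / real ((p + k) choose k)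
     = 1 / real ((p + k + m) choose p)"
proof -
  have "pochhammer (real k + 1) m = fact (k + m) / fact k"
    using fact_add_eq_fact_mult_pochhammer[where 'a = real, of k m] by (simp add: field_simps)
  moreover have "pochhammer (real (p + k) + 1) m = fact (p + k + m) / fact (p + k)"
    using fact_add_eq_fact_mult_pochhammer[where 'a = real, of "p + k" m] by (simp add: field_simps)
  moreover have "real ((p + k) choose k) = fact (p + k) / (fact k * fact p)"
    by (subst binomial_fact) auto
  moreover have "real ((p + k + m) choose p) = fact (p + k + m) / (fact p * fact (k + m))"
    by (subst binomial_fact) (auto simp: add.assoc)
  ultimately show ?thesis
    by (simp only:) (simp add: field_simps)
qed

lemma has_sum_inverse_binomial_hyp1F1:
  "((\<lambda>m. (-1) ^ m / fact m / real ((p + k + m) choose p)) has_sum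
      hyp1F1 (real k + 1) (real (p + k) + 1) (-1) / real ((p + k) choose k)) UNIV"
proof -
  define t where "t m = (-1) ^ m / fact m / real ((p + k + m) choose p)" for m
  define C where "C = real ((p + k) choose k)"
  have "C > 0"
    by (simp add: C_def)
  have t_bound: "norm (t m) \<le> 1 / fact m" for m
  proof -
    have "1 \<le> real ((p + k + m) choose p)"
      using zero_less_binomial[of p "p + k + m"] by linarith
    then have "1 / fact m / real ((p + k + m) choose p) \<le> 1 / fact m / 1"
      by (intro divide_left_mono) auto
    then show ?thesis
      by (simp add: t_def abs_mult)
  qed
  have t_summable: "summable (\<lambda>m. norm (t m))"
  proof (rule summable_comparison_test)
    show "summable (\<lambda>m. 1 / fact m :: real)"
      using summable_exp[of "1::real"] by (simp add: divide_inverse)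
  qed (use t_bound in auto)
  have "pochhammer (real k + 1) m / pochhammer (real (p + k) + 1) m * (-1) ^ m / fact m = C * t m" for m
  proof -
    have "pochhammer (real k + 1) m / pochhammer (real (p + k) + 1) m = C / real ((p + k + m) choose p)"
      using pochhammer_ratio_div_binomial[of k m p] \<open>C > 0\<close> unfolding C_def
      by (simp add: field_simps)
    then show ?thesis
      by (simp add: t_def)
  qed
  then have "hyp1F1 (real k + 1) (real (p + k) + 1) (-1) = C * suminf t"
    unfolding hyp1F1_def using suminf_mult[OF summable_norm_cancel[OF t_summable]] by simp
  then have "t sums (hyp1F1 (real k + 1) (real (p + k) + 1) (-1) / C)"
    using \<open>C > 0\<close> summable_norm_cancel[OF t_summable] by (simp add: summable_sums)
  then show ?thesis
    unfolding t_def[symmetric] C_def[symmetric]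
    by (rule norm_summable_imp_has_sum[OF t_summable])
qed

lemma power_div_fact_le_exp:
  fixes x :: real
  assumes "0 \<le> x"
  shows "x ^ n / fact n \<le> exp x"
proof -
  have series: "(\<lambda>i. x ^ i /\<^sub>R fact i) sums exp x"
    by (rule exp_converges)
  have "(\<Sum>i\<in>{n}. x ^ i /\<^sub>R fact i) \<le> (\<Sum>i. x ^ i /\<^sub>R fact i)"
    using assms by (intro sum_le_suminf[OF sums_summable[OF series]]) auto
  then show ?thesis
    using sums_unique[OF series] by (simp add: divide_inverse mult.commute)
qed

lemma summable_power_div_fact: "summable (\<lambda>k. real k ^ n / fact k)"
proof (rule summable_comparison_test)
  show "summable (\<lambda>k. fact n * (exp 1 ^ k / fact k :: real))"
    using summable_exp[of "exp 1 :: real"]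
    by (intro summable_mult) (simp add: divide_inverse mult.commute)
  have "real k ^ n \<le> fact n * exp 1 ^ k" for k
    using power_div_fact_le_exp[of "real k" n] by (simp add: field_simps flip: exp_of_nat_mult)
  then show "\<exists>N. \<forall>k\<ge>N. norm (real k ^ n / fact k) \<le> fact n * (exp 1 ^ k / fact k :: real)"
    by (auto intro!: exI[of _ 0] divide_right_mono)
qed

lemma abs_summable_on_times_bounded:
  fixes a :: "'i \<Rightarrow> real" and b :: "'j \<Rightarrow> real"
  assumes a: "(\<lambda>x. \<bar>a x\<bar>) summable_on A" and b: "(\<lambda>y. \<bar>b y\<bar>) summable_on B"
    and c: "\<And>x y. x \<in> A \<Longrightarrow> y \<in> B \<Longrightarrow> \<bar>c x y\<bar> \<le> 1"
  shows "(\<lambda>(x, y). \<bar>a x * b y * c x y\<bar>) summable_on A \<times> B"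
proof (rule summable_on_comparison_test)
  have "((\<lambda>y. \<bar>a x * b y\<bar>) has_sum (\<bar>a x\<bar> * infsum (\<lambda>y. \<bar>b y\<bar>) B)) B" for x
    using has_sum_cmult_right[OF has_sum_infsum[OF b], of "\<bar>a x\<bar>"] by (simp add: abs_mult)
  moreover have "(\<lambda>x. \<bar>a x\<bar> * infsum (\<lambda>y. \<bar>b y\<bar>) B) summable_on A"
    using summable_on_cmult_left[OF a] by simp
  ultimately show "(\<lambda>(x, y). \<bar>a x * b y\<bar>) summable_on A \<times> B"
    by (intro summable_on_SigmaI[where g = "\<lambda>x. \<bar>a x\<bar> * infsum (\<lambda>y. \<bar>b y\<bar>) B"]) auto
  show "(\<lambda>(x, y). \<bar>a x * b y * c x y\<bar>) z \<le> (\<lambda>(x, y). \<bar>a x * b y\<bar>) z" if "z \<in> A \<times> B" for z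
    using that c by (auto simp: abs_mult intro!: mult_left_le)
qed auto

lemma sums_diagonals_of_has_sum:
  fixes f :: "nat \<times> nat \<Rightarrow> 'a::{topological_comm_monoid_add,t3_space}"
  assumes "(f has_sum S) UNIV"
  shows "(\<lambda>j. \<Sum>k\<le>j. f (k, j - k)) sums S"
proof -
  have "bij_betw (\<lambda>(j, k). (k, j - k)) (SIGMA j:UNIV. {..j}) (UNIV :: (nat \<times> nat) set)"
    by (rule bij_betwI[where g = "\<lambda>(k, m). (k + m, k)"]) auto
  then have "((\<lambda>x. f ((\<lambda>(j, k). (k, j - k)) x)) has_sum S) (SIGMA j:UNIV. {..j})"
    using assms by (simp only: has_sum_reindex_bij_betw)
  then have "((\<lambda>j. \<Sum>k\<le>j. f (k, j - k)) has_sum S) UNIV"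
    by (rule has_sum_SigmaD) auto
  then show ?thesis
    by (rule has_sum_imp_sums)
qed

lemma fps_nth_exp_minus_one_power_div_fact:
  "fps_nth ((fps_exp (1::real) - 1) ^ j) n / fact j
     = (\<Sum>k\<le>j. real k ^ n / fact k * ((-1) ^ (j - k) / fact (j - k))) / fact n"
proof -
  have "(fps_exp (1::real) - 1) ^ j = (\<Sum>k\<le>j. of_nat (j choose k) * fps_exp 1 ^ k * (-1) ^ (j - k))"
    using binomial_ring[of "fps_exp (1::real)" "-1" j] by simp
  also have "\<dots> = (\<Sum>k\<le>j. fps_const (real (j choose k) * (-1) ^ (j - k)) * fps_exp (real k))"
    by (intro sum.cong refl)
       (simp add: fps_exp_power_mult fps_of_nat[symmetric] fps_const_neg[symmetric]
          fps_const_mult[symmetric] fps_const_power[symmetric]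
          del: fps_const_neg fps_const_power fps_const_mult fps_of_nat)
  finally have "fps_nth ((fps_exp (1::real) - 1) ^ j) n
      = (\<Sum>k\<le>j. real (j choose k) * (-1) ^ (j - k) * real k ^ n) / fact n"
    by (simp add: fps_sum_nth sum_divide_distrib algebra_simps)
  also have "\<dots> = fact j * (\<Sum>k\<le>j. real k ^ n / fact k * ((-1) ^ (j - k) / fact (j - k))) / fact n"
    by (auto simp: sum_distrib_left binomial_fact intro!: sum.cong arg_cong[where f = "\<lambda>x. x / _"])
  finally show ?thesis
    by simp
qed

definition pBell_double_term :: "nat \<Rightarrow> nat \<Rightarrow> nat \<times> nat \<Rightarrow> real" where
  "pBell_double_term n p =
     (\<lambda>(k, m). real k ^ n / fact k * ((-1) ^ m / fact m) / real ((p + k + m) choose p))"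

lemma abs_summable_pBell_double_term:
  "(\<lambda>x. norm (pBell_double_term n p x)) summable_on UNIV"
proof -
  have "(\<lambda>(k, m). \<bar>real k ^ n / fact k * ((-1) ^ m / fact m) * (1 / real ((p + k + m) choose p))\<bar>)
          summable_on UNIV \<times> UNIV"
  proof (rule abs_summable_on_times_bounded)
    show "(\<lambda>k. \<bar>real k ^ n / fact k\<bar>) summable_on UNIV"
      using summable_power_div_fact[of n] by (intro summable_nonneg_imp_summable_on) auto
    show "(\<lambda>m. \<bar>(-1) ^ m / fact m :: real\<bar>) summable_on UNIV"
      using summable_exp[of "1::real"]
      by (intro summable_nonneg_imp_summable_on) (auto simp: abs_mult divide_inverse)
    show "\<bar>1 / real ((p + k + m) choose p)\<bar> \<le> 1" for k m
      using zero_less_binomial[of p "p + k + m"] by (simp add: divide_le_eq_1 Suc_le_eq)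
  qed
  then show ?thesis
    by (simp add: pBell_double_term_def case_prod_unfold mult.assoc)
qed

lemma has_sum_pBell_double_term_row:
  "((\<lambda>m. pBell_double_term n p (k, m)) has_sum
      1 / real ((p + k) choose k) * hyp1F1 (real k + 1) (real (p + k) + 1) (-1) * real k ^ n / fact k)
    UNIV"
  using has_sum_cmult_right[OF has_sum_inverse_binomial_hyp1F1, of "real k ^ n / fact k" p k]
  by (simp add: pBell_double_term_def mult_ac)

lemma sum_pBell_double_term_diagonal:
  "(\<Sum>k\<le>j. pBell_double_term n p (k, j - k))
     = fact n * (fps_nth ((fps_exp (1::real) - 1) ^ j) n / (fact j * real ((j + p) choose p)))"
proof -
  have "p + k + (j - k) = p + j" if "k \<le> j" for k
    using that by simp
  then have "(\<Sum>k\<le>j. pBell_double_term n p (k, j - k))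
      = (\<Sum>k\<le>j. real k ^ n / fact k * ((-1) ^ (j - k) / fact (j - k))) / real ((p + j) choose p)"
    unfolding sum_divide_distrib by (intro sum.cong) (auto simp: pBell_double_term_def)
  also have "\<dots> = fact n * (fps_nth ((fps_exp (1::real) - 1) ^ j) n / fact j) / real ((p + j) choose p)"
    by (simp add: fps_nth_exp_minus_one_power_div_fact)
  finally show ?thesis
    by (simp add: add.commute)
qed

theorem mainTheorem20:
  fixes n p :: nat
  shows "(\<lambda>k. 1 / real ((p + k) choose k) * hyp1F1 (real k + 1) (real (p + k) + 1) (-1)
               * real k ^ n / fact k) sums pBell n p"
proof -
  obtain S where S: "(pBell_double_term n p has_sum S) UNIV"
    using abs_summable_summable[OF abs_summable_pBell_double_term] by (auto simp: summable_on_def)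
  have "((\<lambda>k. 1 / real ((p + k) choose k) * hyp1F1 (real k + 1) (real (p + k) + 1) (-1)
               * real k ^ n / fact k) has_sum S) UNIV"
    by (rule has_sum_SigmaD[OF S[folded UNIV_Times_UNIV]]) (rule has_sum_pBell_double_term_row)
  moreover have "(\<lambda>j. fact n * (fps_nth ((fps_exp (1::real) - 1) ^ j) n / (fact j * real ((j + p) choose p))))
      sums (fact n * (S / fact n))"
    using sums_diagonals_of_has_sum[OF S] by (simp add: sum_pBell_double_term_diagonal)
  then have "pBell n p = S"
    unfolding pBell_def sums_mult_iff[OF fact_nonzero] by (simp add: sums_iff)
  ultimately show ?thesis
    by (simp add: has_sum_imp_sums)
qed

end
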